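(* Let $\mathcal{X},\mathcal{Y}$ be finite sets with $2\le|\mathcal{X}|,|\mathcal{Y}|<\infty$ and $P_{X,Y}$ a joint pmf on $\mathcal{X}\times\mathcal{Y}$ with $P_X(x)>0$ for all $x$ and $P_Y(y)>0$ for all $y$. Let $f:(0,\infty)\to\mathbb{R}$ be convex, strictly convex and thrice differentiable at $1$, with $f(1)=0$ and $f''(1)>0$, such that for every $t\in(0,\infty)$, $$\bigl(f(t)-f'(1)(t-1)\bigr)\left(1-\frac{f'''(1)}{3f''(1)}(t-1)\right)\ge \frac{f''(1)}{2}(t-1)^2,$$ such that $g(x)=\frac{f(x)-f(0)}{x}$ (with $f(0)=\lim_{t\to0^+}f(t)$) is concave on $(0,\infty)$, and such that $f$ induces a sub-additive and homogeneous $f$-entropy. If $(X_1,Y_1),\dots,(X_n,Y_n)$ are i.i.d. with joint pmf $P_{X,Y}$, then $$\eta_{\chi^2}(P_{X_1^n},P_{Y_1^n|X_1^n})\le\eta_f(P_{X_1^n},P_{Y_1^n|X_1^n})\le\frac{f'(1)+f(0)}{f''(1)\min_{x\in\mathcal{X}}P_X(x)}\,\eta_{\chi^2}(P_{X_1^n},P_{Y_1^n|X_1^n}).$$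
   Context: $X_1^n=(X_1,\dots,X_n)$, $Y_1^n=(Y_1,\dots,Y_n)$. Strict convexity at $1$ means $\lambda f(x)+(1-\lambda)f(y)>f(1)$ whenever $\lambda\in(0,1)$, $x,y>0$, $\lambda x+(1-\lambda)y=1$. The $f$-divergence is $D_f(R\|P)=\sum P f(R/P)$ with conventions $f(0)=\lim_{t\to0^+}f(t)$, $0f(0/0)=0$, $0f(r/0)=r\lim_{p\to0^+}pf(1/p)$; $\chi^2(R\|P)=\sum(R-P)^2/P$. For finite-valued $(U,V)$ with channel matrix $W$ of $P_{V|U}$, $\eta_f(P_U,P_{V|U})=\sup\{D_f(WR_U\|WP_U)/D_f(R_U\|P_U): R_U \text{ a pmf},\ 0<D_f(R_U\|P_U)<\infty\}$, and $\eta_{\chi^2}$ is the analogous coefficient for $\chi^2$-divergence. The $f$-entropy of a nonnegative random variable $Z$ is $\mathrm{Ent}_f(Z)=\mathbb{E}[f(Z)]-f(\mathbb{E}[Z])$; it is homogeneous if $\mathrm{Ent}_f(cZ)=c\,\mathrm{Ent}_f(Z)$ for all $c>0$, and sub-additive if for all independent random variables $X_1,\dots,X_n$ and every nonnegative $Z=h(X_1,\dots,X_n)$, $\mathrm{Ent}_f(Z)\le\sum_{i=1}^n\mathbb{E}[\mathrm{Ent}_f^{(i)}(Z)]$, where $\mathrm{Ent}_f^{(i)}(Z)$ is the $f$-entropy of $Z$ with respect to $X_i$ conditionally on $(X_j)_{j\ne i}$ (in the sense of Raginsky, "Strong data processing inequalities and $\Phi$-Sobolev inequalities"). *)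

theory Defs
  imports "HOL-Probability.Probability"
begin

text \<open>Extension of f to 0 by its right limit f0 = lim_{t->0+} f t.\<close>
definition fext :: "real \<Rightarrow> (real \<Rightarrow> real) \<Rightarrow> real \<Rightarrow> real" where
  "fext f0 f t = (if t = 0 then f0 else f t)"

definition fdiv :: "real \<Rightarrow> (real \<Rightarrow> real) \<Rightarrow> 'a set \<Rightarrow> ('a \<Rightarrow> real) \<Rightarrow> ('a \<Rightarrow> real) \<Rightarrow> ereal" where
  "fdiv f0 f A R P =
     (\<Sum>a\<in>A. if P a = 0
             then (if R a = 0 then 0
                   else ereal (R a) * Lim (at_right 0) (\<lambda>p. ereal (p * f (1 / p))))
             else ereal (P a * fext f0 f (R a / P a)))"

definition is_pmf_on :: "'a set \<Rightarrow> ('a \<Rightarrow> real) \<Rightarrow> bool" where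
  "is_pmf_on A R \<longleftrightarrow> (\<forall>a\<in>A. 0 \<le> R a) \<and> sum R A = 1"

text \<open>Output distribution W R of input distribution R through channel W (W u v = P(v|u)).\<close>
definition push :: "'u set \<Rightarrow> ('u \<Rightarrow> 'v \<Rightarrow> real) \<Rightarrow> ('u \<Rightarrow> real) \<Rightarrow> 'v \<Rightarrow> real" where
  "push A W R = (\<lambda>v. \<Sum>u\<in>A. R u * W u v)"

definition eta :: "real \<Rightarrow> (real \<Rightarrow> real) \<Rightarrow> 'u set \<Rightarrow> 'v set \<Rightarrow> ('u \<Rightarrow> real)
                   \<Rightarrow> ('u \<Rightarrow> 'v \<Rightarrow> real) \<Rightarrow> ereal" where
  "eta f0 f A B P W =
     Sup {fdiv f0 f B (push A W R) (push A W P) / fdiv f0 f A R P | R.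
            is_pmf_on A R \<and> 0 < fdiv f0 f A R P \<and> fdiv f0 f A R P < \<infinity>}"

text \<open>chi^2-divergence is the f-divergence of f(t) = (t-1)^2 (so f(0) = 1);
  for P > 0 this is sum (R-P)^2/P, and it is +infinity if R > 0 = P.\<close>
definition chi2div :: "'a set \<Rightarrow> ('a \<Rightarrow> real) \<Rightarrow> ('a \<Rightarrow> real) \<Rightarrow> ereal" where
  "chi2div A R P = fdiv 1 (\<lambda>t. (t - 1)\<^sup>2) A R P"

definition eta_chi2 :: "'u set \<Rightarrow> 'v set \<Rightarrow> ('u \<Rightarrow> real) \<Rightarrow> ('u \<Rightarrow> 'v \<Rightarrow> real) \<Rightarrow> ereal" where
  "eta_chi2 A B P W = eta 1 (\<lambda>t. (t - 1)\<^sup>2) A B P W"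

definition strictly_convex_at_one :: "(real \<Rightarrow> real) \<Rightarrow> bool" where
  "strictly_convex_at_one f \<longleftrightarrow>
     (\<forall>l x y. 0 < l \<and> l < 1 \<and> 0 < x \<and> 0 < y \<and> l * x + (1 - l) * y = 1
        \<longrightarrow> l * f x + (1 - l) * f y > f 1)"

definition thrice_diff_at :: "(real \<Rightarrow> real) \<Rightarrow> real \<Rightarrow> bool" where
  "thrice_diff_at f a \<longleftrightarrow>
     (\<exists>e>0. \<forall>x. \<bar>x - a\<bar> < e \<longrightarrow> f differentiable (at x) \<and> deriv f differentiable (at x))
     \<and> deriv (deriv f) differentiable (at a)"

definition fent :: "real \<Rightarrow> (real \<Rightarrow> real) \<Rightarrow> 'a measure \<Rightarrow> ('a \<Rightarrow> real) \<Rightarrow> real" where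
  "fent f0 f M Z = (\<integral>x. fext f0 f (Z x) \<partial>M) - fext f0 f (\<integral>x. Z x \<partial>M)"

text \<open>Homogeneity: Ent_f(cZ) = c Ent_f(Z) for every nonnegative (integrable) random variable Z
  and c > 0.  Random variables are realised on a probability space with sample space real,
  which is general enough to carry every distribution on [0,infinity).\<close>
definition fent_homogeneous :: "real \<Rightarrow> (real \<Rightarrow> real) \<Rightarrow> bool" where
  "fent_homogeneous f0 f \<longleftrightarrow>
     (\<forall>(M::real measure) Z c.
        prob_space M \<and> Z \<in> borel_measurable M \<and> (\<forall>x\<in>space M. 0 \<le> Z x) \<and> 0 < c \<and>
        integrable M Z \<and> integrable M (\<lambda>x. fext f0 f (Z x)) \<and>
        integrable M (\<lambda>x. fext f0 f (c * Z x))
        \<longrightarrow> fent f0 f M (\<lambda>x. c * Z x) = c * fent f0 f M Z)"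

text \<open>Sub-additivity (tensorisation): for independent X_1..X_n (realised as the coordinates of
  the product space of their laws mu_i) and Z = h(X_1,...,X_n) >= 0,
  Ent_f(Z) <= sum_i E[Ent_f^(i)(Z)], where Ent_f^(i)(Z) at x is the f-entropy of
  y |-> h(x(i:=y)) under mu_i (entropy w.r.t. X_i conditionally on the other coordinates).\<close>
definition fent_subadditive :: "real \<Rightarrow> (real \<Rightarrow> real) \<Rightarrow> bool" where
  "fent_subadditive f0 f \<longleftrightarrow>
     (\<forall>(n::nat) (\<mu>::nat \<Rightarrow> real measure) h.
        (\<forall>i<n. prob_space (\<mu> i)) \<and> h \<in> borel_measurable (PiM {..<n} \<mu>) \<and>
        (\<forall>x\<in>space (PiM {..<n} \<mu>). 0 \<le> h x) \<and>
        integrable (PiM {..<n} \<mu>) h \<and> integrable (PiM {..<n} \<mu>) (\<lambda>x. fext f0 f (h x))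
        \<longrightarrow> fent f0 f (PiM {..<n} \<mu>) h
              \<le> (\<Sum>i<n. \<integral>x. fent f0 f (\<mu> i) (\<lambda>y. h (x(i := y))) \<partial>(PiM {..<n} \<mu>)))"

definition margX :: "('x \<Rightarrow> 'y::finite \<Rightarrow> real) \<Rightarrow> 'x \<Rightarrow> real" where
  "margX P x = (\<Sum>y\<in>UNIV. P x y)"

definition margY :: "('x::finite \<Rightarrow> 'y \<Rightarrow> real) \<Rightarrow> 'y \<Rightarrow> real" where
  "margY P y = (\<Sum>x\<in>UNIV. P x y)"

definition lists_len :: "nat \<Rightarrow> 'a list set" where
  "lists_len n = {xs. length xs = n}"

definition inputN :: "nat \<Rightarrow> ('x \<Rightarrow> 'y::finite \<Rightarrow> real) \<Rightarrow> 'x list \<Rightarrow> real" where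
  "inputN n P xs = (\<Prod>i<n. margX P (xs ! i))"

definition chanN :: "nat \<Rightarrow> ('x \<Rightarrow> 'y::finite \<Rightarrow> real) \<Rightarrow> 'x list \<Rightarrow> 'y list \<Rightarrow> real" where
  "chanN n P xs ys = (\<Prod>i<n. P (xs ! i) (ys ! i) / margX P (xs ! i))"

end

theory Submission
  imports Defs "HOL-Real_Asymp.Real_Asymp"
begin

(* Testing homogeneity of the f-entropy on two-point distributions shows that
   L x = (f x - f0) / x + f0 satisfies L (x y) = L x + L y; differentiability at 1 then forces
   L = c ln with c = f'(1) + f0, i.e. f t = c t ln t + f0 (1 - t), and c = f''(1).

   Lower bound: KL (Q + e (R - Q) || Q) = e^2/2 chi^2 (R || Q) + o(e^2), before and after the
   channel, so every chi^2 ratio is a limit of KL ratios.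

   Upper bound: for the single-letter channel W = P_{Y|X} and any input distribution R,
     KL (W R || P_Y) <= chi^2 (W R || P_Y) <= eta_chi2 chi^2 (R || P_X)
                     <= eta_chi2 KL (R || P_X) / min P_X,
   since the n-letter eta_chi2 dominates the single-letter one (embed R as R x P_X^(n-1)) and by
   Pinsker's inequality in the last step.  A KL contraction constant tensorizes over products
   of channels by the chain rule and the log-sum inequality. *)

section \<open>Elementary inequalities and limits\<close>

lemma xlnx_excess_over_sq_tendsto:
  "((\<lambda>u::real. ((1 + u) * ln (1 + u) - u) / u\<^sup>2) \<longlongrightarrow> 1 / 2) (at 0)"
  by real_asymp

lemma xlnx_excess_scaled_tendsto:
  fixes c :: real
  shows "((\<lambda>e. ((1 + c * e) * ln (1 + c * e) - c * e) / e\<^sup>2) \<longlongrightarrow> c\<^sup>2 / 2) (at 0)"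
proof (cases "c = 0")
  case False
  define \<psi> where "\<psi> u = ((1 + u) * ln (1 + u) - u) / u\<^sup>2" for u :: real
  have "((\<psi> \<circ> (\<lambda>e. c * e)) \<longlongrightarrow> 1 / 2) (at 0)"
    using False unfolding \<psi>_def
    by (intro tendsto_compose_at[OF _ xlnx_excess_over_sq_tendsto])
      (auto intro!: tendsto_eq_intros simp: eventually_at_filter)
  then have "((\<lambda>e. c\<^sup>2 * \<psi> (c * e)) \<longlongrightarrow> c\<^sup>2 * (1 / 2)) (at 0)"
    by (intro tendsto_mult_left) (simp add: comp_def)
  moreover have
    "eventually (\<lambda>e. c\<^sup>2 * \<psi> (c * e) = ((1 + c * e) * ln (1 + c * e) - c * e) / e\<^sup>2) (at 0)"
    using False by (auto simp: eventually_at_filter \<psi>_def power_mult_distrib)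
  ultimately show ?thesis by (simp add: tendsto_cong)
qed simp

lemma pinsker_pointwise:
  fixes t :: real
  assumes "0 \<le> t"
  shows "3 * (t - 1)\<^sup>2 \<le> (2 * t + 4) * (t * ln t - t + 1)"
proof (cases "t = 0")
  case False
  with assms have t: "0 < t" by simp
  define g where "g s = (2 * s + 4) * (s * ln s - s + 1) - 3 * (s - 1)\<^sup>2" for s :: real
  define h where "h s = 4 * s * ln s + 4 * ln s - 8 * s + 8" for s :: real
  have g': "(g has_real_derivative h s) (at s)" if "0 < s" for s :: real
    unfolding g_def h_def using that
    by (auto intro!: derivative_eq_intros simp: field_simps power2_eq_square)
  have h': "(h has_real_derivative 4 * (ln s + 1 / s - 1)) (at s)" if "0 < s" for s :: real
    unfolding h_def using that
    by (auto intro!: derivative_eq_intros simp: field_simps)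
  have h'_nonneg: "0 \<le> 4 * (ln s + 1 / s - 1)" if "0 < s" for s :: real
    using ln_le_minus_one[of "1 / s"] that by (simp add: ln_div)
  have h_le: "h s \<le> h s'" if "0 < s" "s \<le> s'" for s s' :: real
    using that by (intro DERIV_nonneg_imp_nondecreasing[OF \<open>s \<le> s'\<close>])
      (meson h' h'_nonneg less_le_trans)
  have "h 1 = 0" "g 1 = 0" by (simp_all add: h_def g_def)
  have "g 1 \<le> g t" if "1 \<le> t"
    using that h_le[of 1] \<open>h 1 = 0\<close>
    by (intro DERIV_nonneg_imp_nondecreasing[OF that]) (metis g' less_le_trans zero_less_one)
  moreover have "g 1 \<le> g t" if "t \<le> 1"
    using that h_le[of _ 1] \<open>h 1 = 0\<close> t
    by (intro DERIV_nonpos_imp_nonincreasing[OF that]) (metis g' less_le_trans)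
  ultimately show ?thesis using \<open>g 1 = 0\<close> unfolding g_def by linarith
qed simp

lemma log_sum_inequality:
  fixes J T :: "'i \<Rightarrow> real"
  assumes "finite I" "\<forall>i\<in>I. 0 \<le> J i" "\<forall>i\<in>I. 0 \<le> T i" "\<forall>i\<in>I. 0 < J i \<longrightarrow> 0 < T i"
  shows "sum J I * ln (sum J I / sum T I) \<le> (\<Sum>i\<in>I. J i * ln (J i / T i))"
proof (cases "sum J I = 0")
  case False
  define SJ ST where "SJ = sum J I" and "ST = sum T I"
  from False obtain i0 where "i0 \<in> I" "0 < J i0"
    using assms(2) sum.neutral by (metis less_eq_real_def)
  then have "0 < SJ" "0 < ST"
    unfolding SJ_def ST_def using assms by (auto intro!: sum_pos2)
  have pointwise: "J i - T i * SJ / ST \<le> J i * ln (J i / T i) - J i * ln (SJ / ST)" if "i \<in> I" for i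
  proof (cases "J i = 0")
    case True
    then show ?thesis using assms(3) that \<open>0 < SJ\<close> \<open>0 < ST\<close> by simp
  next
    case False
    with assms that have "0 < J i" "0 < T i" by force+
    define x where "x = T i * SJ / (J i * ST)"
    have "0 < x" unfolding x_def using \<open>0 < J i\<close> \<open>0 < T i\<close> \<open>0 < SJ\<close> \<open>0 < ST\<close> by simp
    have "ln (J i / T i) - ln (SJ / ST) = - ln x"
      unfolding x_def using \<open>0 < J i\<close> \<open>0 < T i\<close> \<open>0 < SJ\<close> \<open>0 < ST\<close> by (simp add: ln_div ln_mult)
    then have "J i * (1 - x) \<le> J i * (ln (J i / T i) - ln (SJ / ST))"
      using ln_le_minus_one[OF \<open>0 < x\<close>] \<open>0 < J i\<close> by (intro mult_left_mono) auto
    moreover have "J i * (1 - x) = J i - T i * SJ / ST"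
      unfolding x_def using \<open>0 < J i\<close> by (simp add: field_simps)
    ultimately show ?thesis by (simp add: right_diff_distrib)
  qed
  have "0 = (\<Sum>i\<in>I. J i - T i * SJ / ST)"
    using \<open>0 < ST\<close>
    by (simp add: sum_subtractf SJ_def ST_def flip: sum_divide_distrib sum_distrib_right)
  also have "\<dots> \<le> (\<Sum>i\<in>I. J i * ln (J i / T i) - J i * ln (SJ / ST))"
    using pointwise by (rule sum_mono)
  also have "\<dots> = (\<Sum>i\<in>I. J i * ln (J i / T i)) - SJ * ln (SJ / ST)"
    by (simp add: sum_subtractf SJ_def flip: sum_distrib_right)
  finally show ?thesis unfolding SJ_def ST_def by linarith
qed (simp add: assms(1,2) sum_nonneg_eq_0_iff)

lemma abs_le_half_sum_abs:
  fixes D :: "'a \<Rightarrow> real"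
  assumes "finite A" "a \<in> A" "sum D A = 0"
  shows "\<bar>D a\<bar> \<le> (\<Sum>b\<in>A. \<bar>D b\<bar>) / 2"
proof -
  have "D a = - (\<Sum>b\<in>A - {a}. D b)" using assms sum.remove[of A a D] by simp
  then have "\<bar>D a\<bar> \<le> (\<Sum>b\<in>A - {a}. \<bar>D b\<bar>)" by simp
  moreover have "(\<Sum>b\<in>A. \<bar>D b\<bar>) = \<bar>D a\<bar> + (\<Sum>b\<in>A - {a}. \<bar>D b\<bar>)"
    using assms(1,2) by (rule sum.remove)
  ultimately show ?thesis by linarith
qed

lemma Cauchy_Schwarz_ineq_sum_abs:
  fixes x w v :: "'a \<Rightarrow> real"
  assumes "\<And>a. a \<in> A \<Longrightarrow> 0 \<le> w a" "\<And>a. a \<in> A \<Longrightarrow> 0 \<le> v a"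
    and "\<And>a. a \<in> A \<Longrightarrow> (x a)\<^sup>2 \<le> w a * v a"
  shows "(\<Sum>a\<in>A. \<bar>x a\<bar>)\<^sup>2 \<le> sum w A * sum v A"
proof -
  have "\<bar>x a\<bar> \<le> sqrt (w a) * sqrt (v a)" if "a \<in> A" for a
    using real_sqrt_le_mono[OF assms(3)[OF that]] by (simp add: real_sqrt_mult)
  then have "(\<Sum>a\<in>A. \<bar>x a\<bar>)\<^sup>2 \<le> (\<Sum>a\<in>A. sqrt (w a) * sqrt (v a))\<^sup>2"
    by (intro power_mono sum_mono sum_nonneg) auto
  also have "\<dots> \<le> (\<Sum>a\<in>A. (sqrt (w a))\<^sup>2) * (\<Sum>a\<in>A. (sqrt (v a))\<^sup>2)"
    by (rule Cauchy_Schwarz_ineq_sum)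
  also have "\<dots> = sum w A * sum v A"
    using assms(1,2) by (simp cong: sum.cong)
  finally show ?thesis .
qed

section \<open>Divergences and channels on finite sets\<close>

(* Real-valued versions of fdiv, meaningful only when Q > 0 on A (otherwise x / 0 = 0 gives junk
   values instead of infinity). *)
definition kl_div :: "'a set \<Rightarrow> ('a \<Rightarrow> real) \<Rightarrow> ('a \<Rightarrow> real) \<Rightarrow> real" where
  "kl_div A R Q = (\<Sum>a\<in>A. R a * ln (R a / Q a))"

definition chi_sq :: "'a set \<Rightarrow> ('a \<Rightarrow> real) \<Rightarrow> ('a \<Rightarrow> real) \<Rightarrow> real" where
  "chi_sq A R Q = (\<Sum>a\<in>A. (R a - Q a)\<^sup>2 / Q a)"

definition is_channel :: "'a set \<Rightarrow> 'b set \<Rightarrow> ('a \<Rightarrow> 'b \<Rightarrow> real) \<Rightarrow> bool" where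
  "is_channel A B W \<longleftrightarrow> (\<forall>a\<in>A. (\<forall>b\<in>B. 0 \<le> W a b) \<and> sum (W a) B = 1)"

abbreviation prod_dist :: "('a \<Rightarrow> real) \<Rightarrow> ('b \<Rightarrow> real) \<Rightarrow> 'a \<times> 'b \<Rightarrow> real" where
  "prod_dist P Q \<equiv> \<lambda>(a, b). P a * Q b"

abbreviation prod_channel ::
  "('a \<Rightarrow> 'c \<Rightarrow> real) \<Rightarrow> ('b \<Rightarrow> 'd \<Rightarrow> real) \<Rightarrow> 'a \<times> 'b \<Rightarrow> 'c \<times> 'd \<Rightarrow> real" where
  "prod_channel W1 W2 \<equiv> \<lambda>(a, b) (c, d). W1 a c * W2 b d"

lemma push_nonneg:
  assumes "is_channel A B W" "\<forall>a\<in>A. 0 \<le> R a" "b \<in> B"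
  shows "0 \<le> push A W R b"
  using assms unfolding push_def is_channel_def by (auto intro!: sum_nonneg)

lemma sum_push:
  assumes "finite B" "is_channel A B W"
  shows "sum (push A W R) B = sum R A"
proof -
  have "sum (push A W R) B = (\<Sum>a\<in>A. R a * sum (W a) B)"
    unfolding push_def by (subst sum.swap) (simp add: sum_distrib_left)
  then show ?thesis using assms(2) unfolding is_channel_def by simp
qed

lemma is_pmf_on_push:
  assumes "finite B" "is_channel A B W" "is_pmf_on A R"
  shows "is_pmf_on B (push A W R)"
  using assms push_nonneg sum_push unfolding is_pmf_on_def by metis

lemma push_scale: "push A W (\<lambda>a. c * R a) = (\<lambda>b. c * push A W R b)"
  unfolding push_def by (simp add: sum_distrib_left mult.assoc)

lemma push_segment:
  "push A W (\<lambda>a. Q a + e * (R a - Q a)) = (\<lambda>b. push A W Q b + e * (push A W R b - push A W Q b))"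
  unfolding push_def by (simp add: sum.distrib sum_subtractf sum_distrib_left algebra_simps)

lemma push_reindex:
  assumes "bij_betw h A' A"
  shows "push A W R (g b) = push A' (\<lambda>a b. W (h a) (g b)) (\<lambda>a. R (h a)) b"
  unfolding push_def by (rule sum.reindex_bij_betw[OF assms, symmetric])

lemma push_prod_channel:
  assumes "finite A2"
  shows "push (A1 \<times> A2) (prod_channel W1 W2) R (c, d)
       = push A2 W2 (\<lambda>b. \<Sum>a\<in>A1. R (a, b) * W1 a c) d"
  unfolding push_def sum.cartesian_product'
  by (subst sum.swap) (simp add: sum_distrib_left mult_ac)

lemma push_prod_channel_prod:
  assumes "finite A2"
  shows "push (A1 \<times> A2) (prod_channel W1 W2) (prod_dist R1 R2) (c, d)
       = push A1 W1 R1 c * push A2 W2 R2 d"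
proof -
  have "(\<lambda>b. \<Sum>a\<in>A1. R1 a * R2 b * W1 a c) = (\<lambda>b. push A1 W1 R1 c * R2 b)"
    unfolding push_def by (simp add: sum_distrib_left mult_ac)
  then show ?thesis unfolding push_prod_channel[OF assms] by (simp add: push_scale)
qed

lemma sum_conditional_push:
  "(\<Sum>b\<in>A2. \<Sum>a\<in>A1. R (a, b) * W1 a c) = push A1 W1 (\<lambda>a. \<Sum>b\<in>A2. R (a, b)) c"
  unfolding push_def by (subst sum.swap) (simp add: sum_distrib_right)

lemma fdiv_eq_kl_div:
  assumes "finite A" "\<forall>a\<in>A. 0 < Q a" "is_pmf_on A R" "is_pmf_on A Q"
    and f: "\<forall>t>0. f t = c * t * ln t + f0 * (1 - t)"
  shows "fdiv f0 f A R Q = ereal (c * kl_div A R Q)"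
proof -
  have "fdiv f0 f A R Q = ereal (\<Sum>a\<in>A. Q a * fext f0 f (R a / Q a))"
    unfolding fdiv_def using assms(2) by (simp add: less_imp_neq[symmetric])
  also have "(\<Sum>a\<in>A. Q a * fext f0 f (R a / Q a))
      = (\<Sum>a\<in>A. c * (R a * ln (R a / Q a)) + f0 * (Q a - R a))"
  proof (rule sum.cong[OF refl])
    fix a assume "a \<in> A"
    with assms(2,3) have "0 < Q a" "0 \<le> R a" unfolding is_pmf_on_def by auto
    show "Q a * fext f0 f (R a / Q a) = c * (R a * ln (R a / Q a)) + f0 * (Q a - R a)"
    proof (cases "R a = 0")
      case False
      then have "f (R a / Q a) = c * (R a / Q a) * ln (R a / Q a) + f0 * (1 - R a / Q a)"
        using f \<open>0 < Q a\<close> \<open>0 \<le> R a\<close> by simp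
      then show ?thesis using \<open>0 < Q a\<close> False by (simp add: fext_def) (simp add: field_simps)
    qed (simp add: fext_def)
  qed
  also have "\<dots> = c * kl_div A R Q"
    using assms(3,4) unfolding is_pmf_on_def kl_div_def
    by (simp add: sum.distrib sum_subtractf flip: sum_distrib_left)
  finally show ?thesis .
qed

lemma chi2div_eq_chi_sq:
  assumes "\<forall>a\<in>A. 0 < Q a"
  shows "chi2div A R Q = ereal (chi_sq A R Q)"
proof -
  have "Q a * fext 1 (\<lambda>t. (t - 1)\<^sup>2) (R a / Q a) = (R a - Q a)\<^sup>2 / Q a" if "a \<in> A" for a
    using assms that by (simp add: fext_def field_simps power2_eq_square)
  then show ?thesis
    unfolding chi2div_def fdiv_def chi_sq_def using assms
    by (simp add: less_imp_neq[symmetric] cong: sum.cong)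
qed

lemma chi_sq_nonneg: "\<forall>a\<in>A. 0 < Q a \<Longrightarrow> 0 \<le> chi_sq A R Q"
  unfolding chi_sq_def by (intro sum_nonneg) auto

lemma chi_sq_eq_0D:
  assumes "finite A" "\<forall>a\<in>A. 0 < Q a" "chi_sq A R Q = 0" "a \<in> A"
  shows "R a = Q a"
proof -
  have "\<forall>a\<in>A. (R a - Q a)\<^sup>2 / Q a = 0"
    using assms(1-3) unfolding chi_sq_def by (subst sum_nonneg_eq_0_iff[symmetric]) auto
  then show ?thesis using assms(2,4) by force
qed

lemma kl_div_le_chi_sq:
  assumes "finite A" "\<forall>a\<in>A. 0 < Q a" "is_pmf_on A R" "is_pmf_on A Q"
  shows "kl_div A R Q \<le> chi_sq A R Q"
proof -
  have "chi_sq A R Q = (\<Sum>a\<in>A. R a * (R a / Q a - 1) + (Q a - R a))"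
    unfolding chi_sq_def using assms(2)
    by (intro sum.cong refl) (auto simp: field_simps power2_eq_square)
  also have "\<dots> = (\<Sum>a\<in>A. R a * (R a / Q a - 1))"
    using assms(3,4) unfolding is_pmf_on_def by (simp add: sum.distrib sum_subtractf)
  finally have chi: "chi_sq A R Q = (\<Sum>a\<in>A. R a * (R a / Q a - 1))" .
  have "R a * ln (R a / Q a) \<le> R a * (R a / Q a - 1)" if "a \<in> A" for a
  proof (cases "R a = 0")
    case False
    with that assms(2,3) have "0 < R a" "0 < Q a" unfolding is_pmf_on_def by force+
    then show ?thesis by (intro mult_left_mono ln_le_minus_one) auto
  qed simp
  then show ?thesis unfolding chi kl_div_def by (rule sum_mono)
qed

lemma pinsker:
  assumes "finite A" "\<forall>a\<in>A. 0 < Q a" "is_pmf_on A R" "is_pmf_on A Q"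
  shows "(\<Sum>a\<in>A. \<bar>R a - Q a\<bar>)\<^sup>2 \<le> 2 * kl_div A R Q"
proof -
  define t where "t a = R a / Q a" for a
  define w where "w a = Q a * (2 * t a + 4) / 3" for a
  define \<phi> where "\<phi> a = Q a * (t a * ln (t a) - t a + 1)" for a
  have Q: "0 < Q a" and t: "0 \<le> t a" if "a \<in> A" for a
    using assms(2,3) that unfolding is_pmf_on_def t_def by auto
  then have Q_ne: "Q a \<noteq> 0" if "a \<in> A" for a using that by force
  have "sum w A = (\<Sum>a\<in>A. (2 * R a + 4 * Q a) / 3)"
    unfolding w_def t_def by (intro sum.cong refl) (simp add: Q_ne field_simps)
  then have w_sum: "sum w A = 2"
    using assms(3,4) unfolding is_pmf_on_def
    by (simp add: sum.distrib flip: sum_divide_distrib sum_distrib_left)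
  have "sum \<phi> A = (\<Sum>a\<in>A. R a * ln (R a / Q a) + (Q a - R a))"
    unfolding \<phi>_def t_def by (intro sum.cong refl) (simp add: Q_ne field_simps)
  then have \<phi>_sum: "sum \<phi> A = kl_div A R Q"
    using assms(3,4) unfolding is_pmf_on_def kl_div_def by (simp add: sum.distrib sum_subtractf)
  have w_\<phi>: "0 \<le> w a" "0 \<le> \<phi> a" "(R a - Q a)\<^sup>2 \<le> w a * \<phi> a" if "a \<in> A" for a
  proof -
    have *: "3 * (t a - 1)\<^sup>2 \<le> (2 * t a + 4) * (t a * ln (t a) - t a + 1)"
      using pinsker_pointwise t[OF that] .
    then have "0 \<le> (2 * t a + 4) * (t a * ln (t a) - t a + 1)"
      using zero_le_power2[of "t a - 1"] by linarith
    moreover have "0 < 2 * t a + 4" using t[OF that] by simp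
    ultimately have "0 \<le> t a * ln (t a) - t a + 1"
      by (simp add: zero_le_mult_iff)
    then show "0 \<le> w a" "0 \<le> \<phi> a"
      unfolding w_def \<phi>_def using Q[OF that] t[OF that] by simp_all
    have "(R a - Q a)\<^sup>2 = (Q a)\<^sup>2 * (t a - 1)\<^sup>2"
      unfolding t_def using Q[OF that] by (simp add: field_simps power2_eq_square)
    also have "\<dots> \<le> (Q a)\<^sup>2 * ((2 * t a + 4) * (t a * ln (t a) - t a + 1) / 3)"
      using * by (intro mult_left_mono) auto
    also have "\<dots> = w a * \<phi> a" unfolding w_def \<phi>_def by (simp add: power2_eq_square)
    finally show "(R a - Q a)\<^sup>2 \<le> w a * \<phi> a" .
  qed
  show ?thesis
    using Cauchy_Schwarz_ineq_sum_abs[where x = "\<lambda>a. R a - Q a" and w = w and v = \<phi> and A = A] w_\<phi>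
    unfolding w_sum \<phi>_sum by blast
qed

lemma chi_sq_le_kl_div_div_min:
  assumes "finite A" "\<forall>a\<in>A. 0 < Q a" "is_pmf_on A R" "is_pmf_on A Q"
    and "0 < m" "\<forall>a\<in>A. m \<le> Q a"
  shows "chi_sq A R Q \<le> kl_div A R Q / m"
proof -
  define TV where "TV = (\<Sum>a\<in>A. \<bar>R a - Q a\<bar>)"
  have "sum (\<lambda>a. R a - Q a) A = 0"
    using assms(3,4) unfolding is_pmf_on_def by (simp add: sum_subtractf)
  then have half: "\<bar>R a - Q a\<bar> \<le> TV / 2" if "a \<in> A" for a
    unfolding TV_def using abs_le_half_sum_abs[OF assms(1) that] by blast
  have "chi_sq A R Q \<le> (\<Sum>a\<in>A. \<bar>R a - Q a\<bar> * \<bar>R a - Q a\<bar> / m)"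
    unfolding chi_sq_def using assms(2,5,6)
    by (intro sum_mono) (simp add: divide_left_mono power2_eq_square)
  also have "\<dots> \<le> (\<Sum>a\<in>A. \<bar>R a - Q a\<bar> * (TV / 2) / m)"
    using half assms(5) by (intro sum_mono divide_right_mono mult_left_mono) auto
  also have "\<dots> = TV\<^sup>2 / (2 * m)"
    by (simp add: power2_eq_square flip: sum_divide_distrib sum_distrib_right TV_def)
  also have "\<dots> \<le> 2 * kl_div A R Q / (2 * m)"
    unfolding TV_def using pinsker[OF assms(1-4)] assms(5) by (intro divide_right_mono) auto
  finally show ?thesis by simp
qed

lemma kl_div_scale: "0 < c \<Longrightarrow> kl_div A (\<lambda>a. c * R a) (\<lambda>a. c * Q a) = c * kl_div A R Q"
  unfolding kl_div_def by (simp add: sum_distrib_left mult.assoc)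

lemma kl_div_reindex:
  assumes "bij_betw g B' B"
  shows "kl_div B R Q = kl_div B' (\<lambda>b. R (g b)) (\<lambda>b. Q (g b))"
  unfolding kl_div_def by (rule sum.reindex_bij_betw[OF assms, symmetric])

lemma chi_sq_reindex:
  assumes "bij_betw g B' B"
  shows "chi_sq B R Q = chi_sq B' (\<lambda>b. R (g b)) (\<lambda>b. Q (g b))"
  unfolding chi_sq_def by (rule sum.reindex_bij_betw[OF assms, symmetric])

lemma chi_sq_prod:
  assumes "finite B" "\<forall>b\<in>B. 0 < T b" "sum T B = 1"
  shows "chi_sq (A \<times> B) (prod_dist R T) (prod_dist Q T) = chi_sq A R Q"
proof -
  have "(R a * T b - Q a * T b)\<^sup>2 / (Q a * T b) = (R a - Q a)\<^sup>2 / Q a * T b" if "b \<in> B" for a b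
    using assms(2) that by (cases "Q a = 0") (auto simp: power2_eq_square field_simps)
  then have "chi_sq (A \<times> B) (prod_dist R T) (prod_dist Q T)
      = (\<Sum>a\<in>A. (R a - Q a)\<^sup>2 / Q a * sum T B)"
    unfolding chi_sq_def sum.cartesian_product' sum_distrib_left by (intro sum.cong refl) auto
  then show ?thesis unfolding chi_sq_def assms(3) by simp
qed

lemma kl_div_push_le:
  assumes "finite A" "finite B" "is_channel A B W"
    and "\<forall>a\<in>A. 0 \<le> R a" "\<forall>a\<in>A. 0 \<le> T a" "\<forall>a\<in>A. 0 < R a \<longrightarrow> 0 < T a"
  shows "kl_div B (push A W R) (push A W T) \<le> kl_div A R T"
proof -
  have W: "\<forall>a\<in>A. \<forall>b\<in>B. 0 \<le> W a b" "\<forall>a\<in>A. sum (W a) B = 1"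
    using assms(3) unfolding is_channel_def by auto
  have "kl_div B (push A W R) (push A W T)
      \<le> (\<Sum>b\<in>B. \<Sum>a\<in>A. R a * W a b * ln (R a * W a b / (T a * W a b)))"
    unfolding kl_div_def push_def using assms W
    by (intro sum_mono log_sum_inequality) (auto simp: zero_less_mult_iff)
  also have "\<dots> = (\<Sum>a\<in>A. \<Sum>b\<in>B. W a b * (R a * ln (R a / T a)))"
    by (subst sum.swap) (intro sum.cong refl; simp add: mult_ac)
  also have "\<dots> = kl_div A R T"
    using W(2) unfolding kl_div_def by (simp flip: sum_distrib_right)
  finally show ?thesis .
qed

lemma kl_div_chain_rule:
  fixes R :: "'a \<times> 'b \<Rightarrow> real"
  assumes "finite B" "\<forall>a\<in>A. \<forall>b\<in>B. 0 \<le> R (a, b)" "\<forall>a\<in>A. 0 < P a" "\<forall>b\<in>B. 0 < Q b"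
  defines "r \<equiv> \<lambda>a. \<Sum>b\<in>B. R (a, b)"
  shows "kl_div (A \<times> B) R (prod_dist P Q)
       = kl_div A r P + (\<Sum>a\<in>A. kl_div B (\<lambda>b. R (a, b)) (\<lambda>b. r a * Q b))"
proof -
  have split: "R (a, b) * ln (R (a, b) / (P a * Q b))
      = R (a, b) * ln (r a / P a) + R (a, b) * ln (R (a, b) / (r a * Q b))"
    if "a \<in> A" "b \<in> B" for a b
  proof (cases "R (a, b) = 0")
    case False
    with assms(2) that have "0 < R (a, b)" by (simp add: less_le)
    moreover have "R (a, b) \<le> r a"
      unfolding r_def using assms(1,2) that by (intro member_le_sum) auto
    moreover have "0 < P a" "0 < Q b" using assms(3,4) that by auto
    ultimately show ?thesis by (simp add: ln_div ln_mult algebra_simps)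
  qed simp
  have "kl_div (A \<times> B) R (prod_dist P Q)
      = (\<Sum>a\<in>A. \<Sum>b\<in>B. R (a, b) * ln (R (a, b) / (P a * Q b)))"
    unfolding kl_div_def by (simp add: sum.cartesian_product case_prod_unfold)
  also have "\<dots> = (\<Sum>a\<in>A. \<Sum>b\<in>B. R (a, b) * ln (r a / P a) + R (a, b) * ln (R (a, b) / (r a * Q b)))"
    by (intro sum.cong refl split)
  also have "\<dots> = kl_div A r P + (\<Sum>a\<in>A. kl_div B (\<lambda>b. R (a, b)) (\<lambda>b. r a * Q b))"
    unfolding kl_div_def r_def by (simp add: sum.distrib flip: sum_distrib_right)
  finally show ?thesis .
qed

lemma kl_div_second_order:
  assumes "finite A" "\<forall>a\<in>A. 0 < Q a" "sum d A = 0"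
  shows "((\<lambda>e. kl_div A (\<lambda>a. Q a + e * d a) Q / e\<^sup>2) \<longlongrightarrow> chi_sq A (\<lambda>a. Q a + d a) Q / 2) (at 0)"
proof -
  define \<phi> where "\<phi> u = (1 + u) * ln (1 + u) - u" for u :: real
  have "kl_div A (\<lambda>a. Q a + e * d a) Q = (\<Sum>a\<in>A. Q a * \<phi> (d a / Q a * e) + e * d a)" for e
    unfolding kl_div_def \<phi>_def using assms(2) by (intro sum.cong refl) (auto simp: field_simps)
  then have kl: "kl_div A (\<lambda>a. Q a + e * d a) Q / e\<^sup>2
      = (\<Sum>a\<in>A. Q a * (\<phi> (d a / Q a * e) / e\<^sup>2))" for e
    using assms(3) by (simp add: sum.distrib sum_divide_distrib flip: sum_distrib_left)
  have chi: "chi_sq A (\<lambda>a. Q a + d a) Q / 2 = (\<Sum>a\<in>A. Q a * ((d a / Q a)\<^sup>2 / 2))"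
    unfolding chi_sq_def sum_divide_distrib using assms(2)
    by (intro sum.cong refl) (simp add: power2_eq_square)
  show ?thesis
    unfolding kl chi \<phi>_def by (intro tendsto_sum tendsto_mult_left xlnx_excess_scaled_tendsto)
qed

lemma kl_div_segment_second_order:
  assumes "finite A" "\<forall>a\<in>A. 0 < Q a" "sum R A = sum Q A"
  shows "((\<lambda>e. kl_div A (\<lambda>a. Q a + e * (R a - Q a)) Q / e\<^sup>2) \<longlongrightarrow> chi_sq A R Q / 2) (at_right 0)"
proof -
  have "sum (\<lambda>a. R a - Q a) A = 0" using assms(3) by (simp add: sum_subtractf)
  from kl_div_second_order[OF assms(1,2) this] show ?thesis by (auto intro: tendsto_mono[OF at_le])
qed

section \<open>Contraction coefficients\<close>

definition eta_kl :: "'a set \<Rightarrow> 'b set \<Rightarrow> ('a \<Rightarrow> real) \<Rightarrow> ('a \<Rightarrow> 'b \<Rightarrow> real) \<Rightarrow> ereal" where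
  "eta_kl A B P W = Sup {ereal (kl_div B (push A W R) (push A W P) / kl_div A R P) | R.
                          is_pmf_on A R \<and> 0 < kl_div A R P}"

definition eta_chi_sq :: "'a set \<Rightarrow> 'b set \<Rightarrow> ('a \<Rightarrow> real) \<Rightarrow> ('a \<Rightarrow> 'b \<Rightarrow> real) \<Rightarrow> ereal" where
  "eta_chi_sq A B P W = Sup {ereal (chi_sq B (push A W R) (push A W P) / chi_sq A R P) | R.
                              is_pmf_on A R \<and> 0 < chi_sq A R P}"

lemma Sup_setcompr_cong:
  assumes "\<And>x. P x \<longleftrightarrow> Q x" "\<And>x. Q x \<Longrightarrow> f x = g x"
  shows "Sup {f x | x. P x} = Sup {g x | x. Q x}"
proof -
  have "{f x | x. P x} = {g x | x. Q x}" using assms by (auto; metis)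
  then show ?thesis by simp
qed

lemma eta_eq_eta_kl:
  assumes "finite A" "finite B" "\<forall>a\<in>A. 0 < P a" "is_pmf_on A P" "is_channel A B W"
    and "\<forall>b\<in>B. 0 < push A W P b" "0 < c" "\<forall>t>0. f t = c * t * ln t + f0 * (1 - t)"
  shows "eta f0 f A B P W = eta_kl A B P W"
  unfolding eta_def eta_kl_def
proof (rule Sup_setcompr_cong)
  fix R
  show "(is_pmf_on A R \<and> 0 < fdiv f0 f A R P \<and> fdiv f0 f A R P < \<infinity>)
      \<longleftrightarrow> (is_pmf_on A R \<and> 0 < kl_div A R P)"
  proof (cases "is_pmf_on A R")
    case True
    then show ?thesis
      using fdiv_eq_kl_div[OF assms(1,3) True assms(4,8)] \<open>0 < c\<close> by (simp add: zero_less_mult_iff)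
  qed simp
  assume "is_pmf_on A R \<and> 0 < kl_div A R P"
  then show "fdiv f0 f B (push A W R) (push A W P) / fdiv f0 f A R P
      = ereal (kl_div B (push A W R) (push A W P) / kl_div A R P)"
    using fdiv_eq_kl_div[OF assms(1,3) _ assms(4,8)]
      fdiv_eq_kl_div[OF assms(2,6) is_pmf_on_push[OF assms(2,5)] is_pmf_on_push[OF assms(2,5,4)]
        assms(8)]
      \<open>0 < c\<close> by simp
qed

lemma eta_chi2_eq_eta_chi_sq:
  assumes "\<forall>a\<in>A. 0 < P a" "\<forall>b\<in>B. 0 < push A W P b"
  shows "eta_chi2 A B P W = eta_chi_sq A B P W"
  unfolding eta_chi2_def eta_chi_sq_def chi2div_def[symmetric] eta_def
  by (rule Sup_setcompr_cong) (simp_all add: chi2div_eq_chi_sq assms)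

lemma chi_sq_ratio_le_kl_ratio_bound:
  assumes fin: "finite A" "finite B" and Q: "\<forall>a\<in>A. 0 < Q a" "is_pmf_on A Q"
    and W: "is_channel A B W" and QW: "\<forall>b\<in>B. 0 < push A W Q b"
    and R: "is_pmf_on A R" "0 < chi_sq A R Q"
    and L: "\<And>R'. is_pmf_on A R' \<Longrightarrow> 0 < kl_div A R' Q \<Longrightarrow>
              ereal (kl_div B (push A W R') (push A W Q) / kl_div A R' Q) \<le> L"
  shows "ereal (chi_sq B (push A W R) (push A W Q) / chi_sq A R Q) \<le> L"
proof -
  define klA klB where "klA e = kl_div A (\<lambda>a. Q a + e * (R a - Q a)) Q"
    and "klB e = kl_div B (push A W (\<lambda>a. Q a + e * (R a - Q a))) (push A W Q)" for e
  have "sum R A = sum Q A" using Q(2) R(1) unfolding is_pmf_on_def by simp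
  then have limA: "((\<lambda>e. klA e / e\<^sup>2) \<longlongrightarrow> chi_sq A R Q / 2) (at_right 0)"
    unfolding klA_def by (rule kl_div_segment_second_order[OF fin(1) Q(1)])
  have "sum (push A W R) B = sum (push A W Q) B"
    using sum_push[OF fin(2) W] \<open>sum R A = sum Q A\<close> by simp
  then have limB: "((\<lambda>e. klB e / e\<^sup>2) \<longlongrightarrow> chi_sq B (push A W R) (push A W Q) / 2) (at_right 0)"
    unfolding klB_def push_segment by (rule kl_div_segment_second_order[OF fin(2) QW])
  have "((\<lambda>e. (klB e / e\<^sup>2) / (klA e / e\<^sup>2))
      \<longlongrightarrow> (chi_sq B (push A W R) (push A W Q) / 2) / (chi_sq A R Q / 2)) (at_right 0)"
    using R(2) by (intro tendsto_divide limA limB) simp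
  then have lim: "((\<lambda>e. ereal ((klB e / e\<^sup>2) / (klA e / e\<^sup>2)))
      \<longlongrightarrow> ereal (chi_sq B (push A W R) (push A W Q) / chi_sq A R Q)) (at_right 0)"
    by (intro tendsto_ereal) simp
  have bound: "ereal ((klB e / e\<^sup>2) / (klA e / e\<^sup>2)) \<le> L"
    if "0 < klA e / e\<^sup>2" "0 < e" "e < 1" for e
  proof -
    have "Q a + e * (R a - Q a) = (1 - e) * Q a + e * R a" for a by (simp add: algebra_simps)
    then have "is_pmf_on A (\<lambda>a. Q a + e * (R a - Q a))"
      using Q R(1) that unfolding is_pmf_on_def
      by (auto simp: sum.distrib simp flip: sum_distrib_left)
    moreover have "0 < klA e" using that by (simp add: zero_less_divide_iff)
    ultimately have "ereal (klB e / klA e) \<le> L" using L unfolding klA_def klB_def by blast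
    then show ?thesis using that by simp
  qed
  have "eventually (\<lambda>e. 0 < klA e / e\<^sup>2) (at_right 0)"
    using order_tendstoD(1)[OF limA] R(2) by simp
  moreover have "eventually (\<lambda>e. 0 < e \<and> e < 1) (at_right (0::real))"
    by (rule eventually_at_rightI[of 0 1]) auto
  ultimately have "eventually (\<lambda>e. ereal ((klB e / e\<^sup>2) / (klA e / e\<^sup>2)) \<le> L) (at_right 0)"
    by eventually_elim (use bound in auto)
  then show ?thesis using tendsto_upperbound[OF lim] by simp
qed

lemma eta_chi_sq_le_eta_kl:
  assumes "finite A" "finite B" "\<forall>a\<in>A. 0 < P a" "is_pmf_on A P" "is_channel A B W"
    and "\<forall>b\<in>B. 0 < push A W P b"
  shows "eta_chi_sq A B P W \<le> eta_kl A B P W"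
  unfolding eta_chi_sq_def
proof (rule Sup_least, safe)
  fix R assume "is_pmf_on A R" "0 < chi_sq A R P"
  then show "ereal (chi_sq B (push A W R) (push A W P) / chi_sq A R P) \<le> eta_kl A B P W"
    using assms unfolding eta_kl_def
    by (intro chi_sq_ratio_le_kl_ratio_bound) (auto intro: Sup_upper)
qed

definition kl_sdpi :: "'a set \<Rightarrow> 'b set \<Rightarrow> ('a \<Rightarrow> real) \<Rightarrow> ('a \<Rightarrow> 'b \<Rightarrow> real) \<Rightarrow> real \<Rightarrow> bool" where
  "kl_sdpi A B P W k \<longleftrightarrow>
     (\<forall>R. is_pmf_on A R \<longrightarrow> kl_div B (push A W R) (push A W P) \<le> k * kl_div A R P)"

lemma eta_kl_le_of_kl_sdpi:
  assumes "kl_sdpi A B P W k"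
  shows "eta_kl A B P W \<le> ereal k"
  unfolding eta_kl_def
proof (rule Sup_least, safe)
  fix R assume "is_pmf_on A R" "0 < kl_div A R P"
  then show "ereal (kl_div B (push A W R) (push A W P) / kl_div A R P) \<le> ereal k"
    using assms unfolding kl_sdpi_def by (simp add: divide_le_eq)
qed

lemma kl_sdpi_unnormalized:
  assumes "kl_sdpi A B P W k" "finite A" "\<forall>a\<in>A. 0 \<le> s a"
  shows "kl_div B (push A W s) (\<lambda>b. sum s A * push A W P b) \<le> k * kl_div A s (\<lambda>a. sum s A * P a)"
proof (cases "sum s A = 0")
  case True
  with assms(2,3) have "\<forall>a\<in>A. s a = 0" by (simp add: sum_nonneg_eq_0_iff)
  then show ?thesis by (simp add: kl_div_def push_def)
next
  case False
  define \<sigma> where "\<sigma> = sum s A"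
  with False assms(3) have "0 < \<sigma>" by (simp add: less_le sum_nonneg)
  define R where "R a = s a / \<sigma>" for a
  have s: "s = (\<lambda>a. \<sigma> * R a)" using \<open>0 < \<sigma>\<close> by (simp add: R_def)
  have "is_pmf_on A R"
    unfolding is_pmf_on_def R_def using assms(3) \<open>0 < \<sigma>\<close> \<sigma>_def
    by (simp add: sum_divide_distrib[symmetric])
  then have "\<sigma> * kl_div B (push A W R) (push A W P) \<le> \<sigma> * (k * kl_div A R P)"
    using assms(1) \<open>0 < \<sigma>\<close> unfolding kl_sdpi_def by simp
  then show ?thesis
    unfolding \<sigma>_def[symmetric] unfolding s push_scale kl_div_scale[OF \<open>0 < \<sigma>\<close>]
    by (simp add: mult_ac)
qed

lemma kl_sdpi_reindex:
  assumes h: "bij_betw h A' A" and g: "bij_betw g B' B"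
    and "kl_sdpi A' B' (\<lambda>a. P (h a)) (\<lambda>a b. W (h a) (g b)) k"
  shows "kl_sdpi A B P W k"
  unfolding kl_sdpi_def
proof (intro allI impI)
  fix R assume "is_pmf_on A R"
  then have "is_pmf_on A' (\<lambda>a. R (h a))"
    using h unfolding is_pmf_on_def bij_betw_def by (auto simp: sum.reindex)
  then show "kl_div B (push A W R) (push A W P) \<le> k * kl_div A R P"
    using assms(3) unfolding kl_sdpi_def kl_div_reindex[OF g, of "push A W R"]
      kl_div_reindex[OF h, of R] push_reindex[OF h] by blast
qed

(* Data processing for the channel that applies W1 to the first coordinate only. *)
lemma kl_div_conditional_push_le:
  fixes R :: "'a \<times> 'b \<Rightarrow> real"
  assumes "finite A1" "finite A2" "finite B1" "is_channel A1 B1 W1"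
    and "\<forall>a\<in>A1. \<forall>b\<in>A2. 0 \<le> R (a, b)" "\<forall>b\<in>A2. 0 < P2 b"
  defines "r \<equiv> \<lambda>a. \<Sum>b\<in>A2. R (a, b)"
  shows "(\<Sum>c\<in>B1. kl_div A2 (\<lambda>b. \<Sum>a\<in>A1. R (a, b) * W1 a c) (\<lambda>b. push A1 W1 r c * P2 b))
       \<le> (\<Sum>a\<in>A1. kl_div A2 (\<lambda>b. R (a, b)) (\<lambda>b. r a * P2 b))"
proof -
  have "(\<Sum>c\<in>B1. kl_div A2 (\<lambda>b. \<Sum>a\<in>A1. R (a, b) * W1 a c) (\<lambda>b. push A1 W1 r c * P2 b))
      = (\<Sum>b\<in>A2. kl_div B1 (push A1 W1 (\<lambda>a. R (a, b))) (push A1 W1 (\<lambda>a. r a * P2 b)))"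
  proof -
    have "push A1 W1 (\<lambda>a. r a * P2 b) = (\<lambda>c. push A1 W1 r c * P2 b)" for b
      unfolding push_def by (simp add: sum_distrib_left mult_ac)
    then show ?thesis unfolding kl_div_def by (subst sum.swap) (simp add: push_def)
  qed
  also have "\<dots> \<le> (\<Sum>b\<in>A2. kl_div A1 (\<lambda>a. R (a, b)) (\<lambda>a. r a * P2 b))"
  proof (intro sum_mono kl_div_push_le[OF assms(1,3,4)] ballI impI)
    fix a b assume "a \<in> A1" "b \<in> A2"
    moreover have "R (a, b) \<le> r a"
      unfolding r_def using assms(2,5) \<open>a \<in> A1\<close> \<open>b \<in> A2\<close> by (intro member_le_sum) auto
    ultimately show "0 \<le> R (a, b)" "0 \<le> r a * P2 b" "0 < R (a, b) \<Longrightarrow> 0 < r a * P2 b"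
      using assms(5,6) by fastforce+
  qed
  also have "\<dots> = (\<Sum>a\<in>A1. kl_div A2 (\<lambda>b. R (a, b)) (\<lambda>b. r a * P2 b))"
    unfolding kl_div_def by (rule sum.swap)
  finally show ?thesis .
qed

lemma kl_div_push_prod_channel:
  fixes R :: "'a \<times> 'b \<Rightarrow> real"
  assumes fin: "finite A2" "finite B2" and R: "\<forall>a\<in>A1. \<forall>b\<in>A2. 0 \<le> R (a, b)"
    and W: "is_channel A1 B1 W1" "is_channel A2 B2 W2"
    and Q: "\<forall>c\<in>B1. 0 < push A1 W1 P1 c" "\<forall>d\<in>B2. 0 < push A2 W2 P2 d"
  defines "r \<equiv> \<lambda>a. \<Sum>b\<in>A2. R (a, b)" and "s \<equiv> \<lambda>c b. \<Sum>a\<in>A1. R (a, b) * W1 a c"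
  shows "kl_div (B1 \<times> B2) (push (A1 \<times> A2) (prod_channel W1 W2) R)
           (push (A1 \<times> A2) (prod_channel W1 W2) (prod_dist P1 P2))
       = kl_div B1 (push A1 W1 r) (push A1 W1 P1)
         + (\<Sum>c\<in>B1. kl_div B2 (push A2 W2 (s c)) (\<lambda>d. push A1 W1 r c * push A2 W2 P2 d))"
proof -
  have s_nonneg: "\<forall>b\<in>A2. 0 \<le> s c b" if "c \<in> B1" for c
    using R W(1) that unfolding s_def is_channel_def by (auto intro!: sum_nonneg)
  have out_marg: "(\<Sum>d\<in>B2. push A2 W2 (s c) d) = push A1 W1 r c" for c
    using sum_push[OF fin(2) W(2)] sum_conditional_push unfolding s_def r_def by simp
  have "push (A1 \<times> A2) (prod_channel W1 W2) R (c, d) = push A2 W2 (s c) d" for c d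
    unfolding s_def by (rule push_prod_channel[OF fin(1)])
  moreover have "push (A1 \<times> A2) (prod_channel W1 W2) (prod_dist P1 P2) (c, d)
      = push A1 W1 P1 c * push A2 W2 P2 d" for c d
    by (rule push_prod_channel_prod[OF fin(1)])
  ultimately have "kl_div (B1 \<times> B2) (push (A1 \<times> A2) (prod_channel W1 W2) R)
        (push (A1 \<times> A2) (prod_channel W1 W2) (prod_dist P1 P2))
      = kl_div (B1 \<times> B2) (\<lambda>(c, d). push A2 W2 (s c) d) (prod_dist (push A1 W1 P1) (push A2 W2 P2))"
    unfolding kl_div_def by (intro sum.cong refl) auto
  also have "\<dots> = kl_div B1 (push A1 W1 r) (push A1 W1 P1)
      + (\<Sum>c\<in>B1. kl_div B2 (push A2 W2 (s c)) (\<lambda>d. push A1 W1 r c * push A2 W2 P2 d))"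
    using kl_div_chain_rule[where R = "\<lambda>(c, d). push A2 W2 (s c) d" and A = B1 and B = B2
        and P = "push A1 W1 P1" and Q = "push A2 W2 P2"] fin Q s_nonneg W(2)
    by (simp add: out_marg push_nonneg)
  finally show ?thesis .
qed

lemma kl_sdpi_prod:
  assumes fin: "finite A1" "finite A2" "finite B1" "finite B2"
    and P: "\<forall>a\<in>A1. 0 < P1 a" "\<forall>b\<in>A2. 0 < P2 b"
    and W: "is_channel A1 B1 W1" "is_channel A2 B2 W2"
    and Q: "\<forall>c\<in>B1. 0 < push A1 W1 P1 c" "\<forall>d\<in>B2. 0 < push A2 W2 P2 d"
    and k: "0 \<le> k" "kl_sdpi A1 B1 P1 W1 k" "kl_sdpi A2 B2 P2 W2 k"
  shows "kl_sdpi (A1 \<times> A2) (B1 \<times> B2) (prod_dist P1 P2) (prod_channel W1 W2) k"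
  unfolding kl_sdpi_def
proof (intro allI impI)
  fix R :: "'a \<times> 'b \<Rightarrow> real"
  assume R: "is_pmf_on (A1 \<times> A2) R"
  define r where "r = (\<lambda>a. \<Sum>b\<in>A2. R (a, b))"
  define s where "s = (\<lambda>c b. \<Sum>a\<in>A1. R (a, b) * W1 a c)"
  have R_nonneg: "\<forall>a\<in>A1. \<forall>b\<in>A2. 0 \<le> R (a, b)" using R unfolding is_pmf_on_def by auto
  have "is_pmf_on A1 r"
    using R unfolding is_pmf_on_def r_def by (auto intro: sum_nonneg simp: sum.cartesian_product)
  have s_nonneg: "\<forall>b\<in>A2. 0 \<le> s c b" if "c \<in> B1" for c
    using R_nonneg W(1) that unfolding s_def is_channel_def by (auto intro!: sum_nonneg)
  have sum_s: "sum (s c) A2 = push A1 W1 r c" for c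
    unfolding s_def r_def by (rule sum_conditional_push)
  have "kl_div (B1 \<times> B2) (push (A1 \<times> A2) (prod_channel W1 W2) R)
          (push (A1 \<times> A2) (prod_channel W1 W2) (prod_dist P1 P2))
      = kl_div B1 (push A1 W1 r) (push A1 W1 P1)
        + (\<Sum>c\<in>B1. kl_div B2 (push A2 W2 (s c)) (\<lambda>d. push A1 W1 r c * push A2 W2 P2 d))"
    unfolding r_def s_def by (rule kl_div_push_prod_channel[OF fin(2,4) R_nonneg W Q])
  also have "\<dots> \<le> k * kl_div A1 r P1 + (\<Sum>c\<in>B1. k * kl_div A2 (s c) (\<lambda>b. push A1 W1 r c * P2 b))"
    using k(2) \<open>is_pmf_on A1 r\<close> kl_sdpi_unnormalized[OF k(3) fin(2) s_nonneg]
    unfolding kl_sdpi_def sum_s by (intro add_mono sum_mono) auto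
  also have "\<dots> \<le> k * (kl_div A1 r P1 + (\<Sum>a\<in>A1. kl_div A2 (\<lambda>b. R (a, b)) (\<lambda>b. r a * P2 b)))"
    using kl_div_conditional_push_le[OF fin(1,2,3) W(1) R_nonneg P(2)] k(1)
    unfolding s_def r_def by (simp add: distrib_left mult_left_mono flip: sum_distrib_left)
  also have "\<dots> = k * kl_div (A1 \<times> A2) R (prod_dist P1 P2)"
    using kl_div_chain_rule[OF fin(2) R_nonneg P] unfolding r_def by simp
  finally show "kl_div (B1 \<times> B2) (push (A1 \<times> A2) (prod_channel W1 W2) R)
          (push (A1 \<times> A2) (prod_channel W1 W2) (prod_dist P1 P2))
      \<le> k * kl_div (A1 \<times> A2) R (prod_dist P1 P2)" .
qed

section \<open>Homogeneous f-entropies\<close>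

lemma fent_homogeneous_two_point:
  assumes "fent_homogeneous f0 f" "0 < c" "0 < q" "q < 1"
  shows "f c * q + f0 * (1 - q) - f (c * q) = c * (f 1 * q + f0 * (1 - q) - f q)"
proof -
  define M where "M = measure_pmf (map_pmf (\<lambda>b. if b then 1 else 0 :: real) (bernoulli_pmf q))"
  have integral: "(\<integral>x. g x \<partial>M) = g 1 * q + g 0 * (1 - q)" for g :: "real \<Rightarrow> real"
    unfolding M_def using assms(3,4) by (simp add: integral_map_pmf)
  have "integrable M g" for g :: "real \<Rightarrow> real"
    unfolding M_def by (rule integrable_measure_pmf_finite) simp
  then have "prob_space M \<and> (\<lambda>x. \<bar>x\<bar>) \<in> borel_measurable M \<and> (\<forall>x\<in>space M. 0 \<le> \<bar>x\<bar>) \<and> 0 < c \<and>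
      integrable M (\<lambda>x. \<bar>x\<bar>) \<and> integrable M (\<lambda>x. fext f0 f \<bar>x\<bar>) \<and>
      integrable M (\<lambda>x. fext f0 f (c * \<bar>x\<bar>))"
    using assms(2) unfolding M_def by (auto simp: prob_space_measure_pmf)
  then have "fent f0 f M (\<lambda>x. c * \<bar>x\<bar>) = c * fent f0 f M (\<lambda>x. \<bar>x\<bar>)"
    using assms(1) unfolding fent_homogeneous_def by blast
  then show ?thesis
    unfolding fent_def integral using assms(2-4) by (simp add: fext_def)
qed

lemma mult_additive_from_lt_one:
  fixes L :: "real \<Rightarrow> real"
  assumes L: "\<And>x q. 0 < x \<Longrightarrow> 0 < q \<Longrightarrow> q < 1 \<Longrightarrow> L (x * q) = L x + L q"
    and "0 < x" "0 < y"
  shows "L (x * y) = L x + L y"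
proof -
  have L1: "L 1 = 0" using L[of 1 "1/2"] by simp
  consider "y < 1" | "y = 1" | "1 < y" by linarith
  then show ?thesis
  proof cases
    case 1
    then show ?thesis using L assms(2,3) by blast
  next
    case 2
    then show ?thesis using L1 by simp
  next
    case 3
    have "L 1 = L y + L (1 / y)" using L[of y "1 / y"] 3 by simp
    moreover have "L x = L (x * y) + L (1 / y)" using L[of "x * y" "1 / y"] 3 \<open>0 < x\<close> by simp
    ultimately show ?thesis using L1 by simp
  qed
qed

lemma mult_additive_eq_ln:
  fixes L :: "real \<Rightarrow> real"
  assumes L: "\<And>x y. 0 < x \<Longrightarrow> 0 < y \<Longrightarrow> L (x * y) = L x + L y"
    and L': "(L has_real_derivative a) (at 1)" and "0 < x"
  shows "L x = a * ln x"
proof -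
  have deriv: "(L has_real_derivative a / y) (at y)" if "0 < y" for y
  proof -
    have "((\<lambda>z. L y + L (z / y)) has_real_derivative a / y) (at y)"
      using that L' by (auto intro!: derivative_eq_intros DERIV_chain2[of L])
    then show ?thesis
    proof (rule has_field_derivative_transform_within_open[where S = "{0<..}"])
      show "L y + L (z / y) = L z" if "z \<in> {0<..}" for z
        using L[of y "z / y"] \<open>0 < y\<close> that by simp
    qed (use that in auto)
  qed
  have "\<exists>k. \<forall>z\<in>{0<..}. L z - a * ln z = k"
  proof (rule has_field_derivative_zero_constant)
    fix z :: real assume "z \<in> {0<..}"
    then have "((\<lambda>z. L z - a * ln z) has_real_derivative a / z - a * (1 / z)) (at z)"
      by (auto intro!: derivative_eq_intros deriv)
    then show "((\<lambda>z. L z - a * ln z) has_real_derivative 0) (at z within {0<..})"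
      by (simp add: has_field_derivative_at_within)
  qed (rule convex_real_interval)
  then obtain k where k: "\<forall>z\<in>{0<..}. L z - a * ln z = k" by blast
  moreover have "L 1 = 0" using L[of 1 1] by simp
  ultimately have "k = 0" using bspec[OF k, of 1] by simp
  then show ?thesis using k \<open>0 < x\<close> by simp
qed

lemma fent_homogeneous_imp_xlnx:
  assumes hom: "fent_homogeneous f0 f" and "f 1 = 0" "f differentiable (at 1)" "0 < t"
  shows "f t = (deriv f 1 + f0) * t * ln t + f0 * (1 - t)"
proof -
  define L where "L x = (f x - f0) / x + f0" for x
  have f: "f x = f0 + x * (L x - f0)" if "0 < x" for x unfolding L_def using that by simp
  have "L (x * q) = L x + L q" if "0 < x" "0 < q" "q < 1" for x q
  proof -
    have "x * q * (L x + L q - L (x * q)) = 0"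
      using fent_homogeneous_two_point[OF hom that] \<open>f 1 = 0\<close> f[of x] f[of q] f[of "x * q"] that
      by (simp add: algebra_simps)
    then show ?thesis using that by simp
  qed
  then have L_mult: "L (x * y) = L x + L y" if "0 < x" "0 < y" for x y
    using mult_additive_from_lt_one that by blast
  have "(f has_real_derivative deriv f 1) (at 1)"
    using \<open>f differentiable (at 1)\<close> by (simp add: DERIV_deriv_iff_real_differentiable)
  then have "(L has_real_derivative deriv f 1 + f0) (at 1)"
    unfolding L_def using \<open>f 1 = 0\<close> by (auto intro!: derivative_eq_intros)
  then have "L t = (deriv f 1 + f0) * ln t" using mult_additive_eq_ln[OF L_mult] \<open>0 < t\<close> by blast
  then show ?thesis using f[OF \<open>0 < t\<close>] by (simp add: algebra_simps)
qed

lemma deriv2_xlnx: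
  fixes f :: "real \<Rightarrow> real"
  assumes f: "\<forall>t>0. f t = a * t * ln t + f0 * (1 - t)"
  shows "deriv (deriv f) 1 = a"
proof -
  have "(f has_real_derivative a * (ln t + 1) - f0) (at t)" if "0 < t" for t
  proof -
    have "((\<lambda>t. a * t * ln t + f0 * (1 - t)) has_real_derivative a * (ln t + 1) - f0) (at t)"
      using that by (auto intro!: derivative_eq_intros simp: algebra_simps)
    then show ?thesis
      by (rule has_field_derivative_transform_within_open[where S = "{0<..}"]) (use that f in auto)
  qed
  then have f': "deriv f t = a * (ln t + 1) - f0" if "0 < t" for t
    using that DERIV_imp_deriv by blast
  have "((\<lambda>t. a * (ln t + 1) - f0) has_real_derivative a) (at 1)"
    by (auto intro!: derivative_eq_intros)
  then have "(deriv f has_real_derivative a) (at 1)"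
    by (rule has_field_derivative_transform_within_open[where S = "{0<..}"]) (use f' in auto)
  then show ?thesis by (rule DERIV_imp_deriv)
qed

section \<open>Memoryless channels\<close>

definition chan1 :: "('x \<Rightarrow> 'y::finite \<Rightarrow> real) \<Rightarrow> 'x \<Rightarrow> 'y \<Rightarrow> real" where
  "chan1 P x y = P x y / margX P x"

lemma finite_lists_len [simp]: "finite (lists_len n :: 'a::finite list set)"
  unfolding lists_len_def using finite_lists_length_eq[of "UNIV :: 'a set" n] by simp

lemma lists_len_0: "lists_len 0 = {[]}"
  unfolding lists_len_def by auto

lemma bij_betw_Cons_lists_len:
  "bij_betw (\<lambda>(x, xs). x # xs) (UNIV \<times> lists_len n) (lists_len (Suc n))"
  unfolding bij_betw_def inj_on_def lists_len_def by (auto simp: image_iff length_Suc_conv)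

lemma sum_lists_len_Suc:
  "(\<Sum>zs\<in>lists_len (Suc n). g zs) = (\<Sum>x\<in>UNIV. \<Sum>xs\<in>lists_len n. g (x # xs))"
  using sum.reindex_bij_betw[OF bij_betw_Cons_lists_len, of g] by (simp add: sum.cartesian_product')

lemma inputN_Cons: "inputN (Suc n) P (x # xs) = margX P x * inputN n P xs"
  unfolding inputN_def prod.lessThan_Suc_shift by simp

lemma chanN_Cons: "chanN (Suc n) P (x # xs) (y # ys) = chan1 P x y * chanN n P xs ys"
  unfolding chanN_def chan1_def prod.lessThan_Suc_shift by simp

locale joint_pmf =
  fixes P :: "'x::finite \<Rightarrow> 'y::finite \<Rightarrow> real"
  assumes nonneg: "\<forall>x y. 0 \<le> P x y" and sum_eq_1: "(\<Sum>x\<in>UNIV. \<Sum>y\<in>UNIV. P x y) = 1"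
    and margX_pos: "\<forall>x. 0 < margX P x" and margY_pos: "\<forall>y. 0 < margY P y"
begin

lemma margX_ne_0 [simp]: "margX P x \<noteq> 0"
  using margX_pos by (metis less_irrefl)

lemma is_pmf_on_margX: "is_pmf_on UNIV (margX P)"
  unfolding is_pmf_on_def margX_def using nonneg sum_eq_1 by (simp add: sum_nonneg)

lemma is_channel_chan1: "is_channel UNIV UNIV (chan1 P)"
  unfolding is_channel_def chan1_def using nonneg margX_pos
  by (simp add: divide_nonneg_pos flip: sum_divide_distrib margX_def)

lemma push_chan1_margX: "push UNIV (chan1 P) (margX P) = margY P"
  unfolding push_def chan1_def margY_def using margX_pos by (simp add: less_imp_neq[symmetric])

lemma inputN_pos: "0 < inputN n P xs"
  unfolding inputN_def using margX_pos by (simp add: prod_pos)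

lemma is_pmf_on_inputN: "is_pmf_on (lists_len n) (inputN n P)"
proof (induction n)
  case 0
  then show ?case by (simp add: is_pmf_on_def lists_len_0 inputN_def)
next
  case (Suc n)
  then show ?case
    using inputN_pos is_pmf_on_margX unfolding is_pmf_on_def sum_lists_len_Suc inputN_Cons
    by (simp add: less_imp_le flip: sum_distrib_left sum_distrib_right)
qed

lemma is_channel_chanN: "is_channel (lists_len n) (lists_len n) (chanN n P)"
proof (induction n)
  case 0
  then show ?case by (simp add: is_channel_def lists_len_0 chanN_def)
next
  case (Suc n)
  show ?case unfolding is_channel_def
  proof
    fix xs :: "'x list" assume "xs \<in> lists_len (Suc n)"
    then obtain x xs' where xs: "xs = x # xs'" "xs' \<in> lists_len n"
      unfolding lists_len_def by (auto simp: length_Suc_conv)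
    then have "\<forall>ys\<in>lists_len (Suc n). 0 \<le> chanN (Suc n) P xs ys"
      using Suc.IH is_channel_chan1 unfolding is_channel_def lists_len_def
      by (auto simp: length_Suc_conv chanN_Cons)
    moreover have "sum (chanN (Suc n) P xs) (lists_len (Suc n)) = 1"
      using Suc.IH is_channel_chan1 xs unfolding is_channel_def sum_lists_len_Suc
      by (simp add: chanN_Cons flip: sum_distrib_left sum_distrib_right)
    ultimately show "(\<forall>ys\<in>lists_len (Suc n). 0 \<le> chanN (Suc n) P xs ys)
        \<and> sum (chanN (Suc n) P xs) (lists_len (Suc n)) = 1" ..
  qed
qed

lemma push_chanN_Cons:
  "push (lists_len (Suc n)) (chanN (Suc n) P) R (y # ys)
     = push (UNIV \<times> lists_len n) (prod_channel (chan1 P) (chanN n P))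
         (\<lambda>(x, xs). R (x # xs)) (y, ys)"
  using push_reindex[OF bij_betw_Cons_lists_len,
      where W = "chanN (Suc n) P" and R = R and g = "\<lambda>(y, ys). y # ys" and b = "(y, ys)"]
  by (simp add: chanN_Cons case_prod_unfold)

lemma push_chanN_inputN_pos: "ys \<in> lists_len n \<Longrightarrow> 0 < push (lists_len n) (chanN n P) (inputN n P) ys"
proof (induction n arbitrary: ys)
  case 0
  then show ?case by (simp add: lists_len_0 push_def chanN_def inputN_def)
next
  case (Suc n)
  then obtain y ys' where "ys = y # ys'" "ys' \<in> lists_len n"
    unfolding lists_len_def by (auto simp: length_Suc_conv)
  moreover have "(\<lambda>(x, xs). inputN (Suc n) P (x # xs)) = prod_dist (margX P) (inputN n P)"
    by (simp add: inputN_Cons)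
  ultimately show ?case
    using Suc.IH margY_pos
    by (simp add: push_chanN_Cons push_prod_channel_prod push_chan1_margX)
qed

lemma kl_sdpi_iid:
  assumes "0 \<le> k" "kl_sdpi UNIV UNIV (margX P) (chan1 P) k"
  shows "kl_sdpi (lists_len n) (lists_len n) (inputN n P) (chanN n P) k"
proof (induction n)
  case 0
  show ?case
    unfolding kl_sdpi_def is_pmf_on_def
    by (simp add: lists_len_0 kl_div_def push_def chanN_def inputN_def)
next
  case (Suc n)
  have "kl_sdpi (UNIV \<times> lists_len n) (UNIV \<times> lists_len n) (prod_dist (margX P) (inputN n P))
      (prod_channel (chan1 P) (chanN n P)) k"
    using margX_pos inputN_pos margY_pos push_chanN_inputN_pos
    by (intro kl_sdpi_prod is_channel_chan1 is_channel_chanN assms Suc.IH)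
      (simp_all add: push_chan1_margX)
  then show ?case
    by (intro kl_sdpi_reindex[OF bij_betw_Cons_lists_len bij_betw_Cons_lists_len])
      (simp add: inputN_Cons chanN_Cons case_prod_unfold)
qed

lemma chi_sq_ratio_chan1_le_eta_chi_sq:
  assumes "is_pmf_on UNIV R1" "0 < chi_sq UNIV R1 (margX P)"
  shows "ereal (chi_sq UNIV (push UNIV (chan1 P) R1) (margY P) / chi_sq UNIV R1 (margX P))
       \<le> eta_chi_sq (lists_len (Suc n)) (lists_len (Suc n)) (inputN (Suc n) P) (chanN (Suc n) P)"
proof -
  define R where "R zs = R1 (hd zs) * inputN n P (tl zs)" for zs
  define Q where "Q = push (lists_len n) (chanN n P) (inputN n P)"
  have "is_pmf_on (lists_len n) Q"
    unfolding Q_def by (intro is_pmf_on_push is_channel_chanN is_pmf_on_inputN) simp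
  then have Q: "sum Q (lists_len n) = 1" "\<forall>ys\<in>lists_len n. 0 < Q ys"
    unfolding Q_def is_pmf_on_def using push_chanN_inputN_pos by auto
  have "is_pmf_on (lists_len (Suc n)) R"
    using assms(1) is_pmf_on_inputN inputN_pos unfolding is_pmf_on_def R_def sum_lists_len_Suc
    by (simp add: less_imp_le flip: sum_distrib_left sum_distrib_right)
  moreover have "chi_sq (lists_len (Suc n)) R (inputN (Suc n) P) = chi_sq UNIV R1 (margX P)"
  proof -
    have "(\<lambda>p. R (case p of (x, xs) \<Rightarrow> x # xs)) = prod_dist R1 (inputN n P)"
      and "(\<lambda>p. inputN (Suc n) P (case p of (x, xs) \<Rightarrow> x # xs)) = prod_dist (margX P) (inputN n P)"
      unfolding fun_eq_iff by (auto simp: R_def inputN_Cons)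
    then show ?thesis
      unfolding chi_sq_reindex[OF bij_betw_Cons_lists_len]
      using chi_sq_prod[OF _ _ is_pmf_on_inputN[unfolded is_pmf_on_def, THEN conjunct2]] inputN_pos
      by simp
  qed
  moreover have "chi_sq (lists_len (Suc n)) (push (lists_len (Suc n)) (chanN (Suc n) P) R)
        (push (lists_len (Suc n)) (chanN (Suc n) P) (inputN (Suc n) P))
      = chi_sq UNIV (push UNIV (chan1 P) R1) (margY P)"
  proof -
    have "(\<lambda>p. push (lists_len (Suc n)) (chanN (Suc n) P) R (case p of (y, ys) \<Rightarrow> y # ys))
          = prod_dist (push UNIV (chan1 P) R1) Q"
      and "(\<lambda>p. push (lists_len (Suc n)) (chanN (Suc n) P) (inputN (Suc n) P)
                (case p of (y, ys) \<Rightarrow> y # ys))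
          = prod_dist (margY P) Q"
      unfolding fun_eq_iff Q_def
      by (auto simp: push_chanN_Cons R_def inputN_Cons push_prod_channel_prod push_chan1_margX)
    then show ?thesis
      unfolding chi_sq_reindex[OF bij_betw_Cons_lists_len] using chi_sq_prod[OF _ Q(2,1)] by simp
  qed
  ultimately show ?thesis
    using assms(2) unfolding eta_chi_sq_def by (intro Sup_upper CollectI exI[of _ R]) simp
qed

lemma Min_margX_pos: "0 < Min (range (margX P))"
  using margX_pos by (simp add: Min_gr_iff)

lemma kl_sdpi_chan1_of_chi_sq:
  assumes "0 \<le> e"
    and chi: "\<And>R1. is_pmf_on UNIV R1 \<Longrightarrow> 0 < chi_sq UNIV R1 (margX P) \<Longrightarrow>
               chi_sq UNIV (push UNIV (chan1 P) R1) (margY P) \<le> e * chi_sq UNIV R1 (margX P)"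
  shows "kl_sdpi UNIV UNIV (margX P) (chan1 P) (e / Min (range (margX P)))"
  unfolding kl_sdpi_def push_chan1_margX
proof (intro allI impI)
  fix R1 :: "'x \<Rightarrow> real" assume R1: "is_pmf_on UNIV R1"
  have push_R1: "is_pmf_on UNIV (push UNIV (chan1 P) R1)"
    by (intro is_pmf_on_push is_channel_chan1 R1) simp
  have "chi_sq UNIV (push UNIV (chan1 P) R1) (margY P) \<le> e * chi_sq UNIV R1 (margX P)"
  proof (cases "chi_sq UNIV R1 (margX P) = 0")
    case True
    then have "R1 = margX P" using chi_sq_eq_0D[of UNIV "margX P" R1] margX_pos by auto
    then show ?thesis by (simp add: push_chan1_margX chi_sq_def)
  next
    case False
    then show ?thesis using chi R1 chi_sq_nonneg[of UNIV "margX P" R1] margX_pos by simp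
  qed
  also have "\<dots> \<le> e * (kl_div UNIV R1 (margX P) / Min (range (margX P)))"
    using chi_sq_le_kl_div_div_min[OF _ _ R1 is_pmf_on_margX Min_margX_pos] margX_pos \<open>0 \<le> e\<close>
    by (intro mult_left_mono) simp_all
  finally have "chi_sq UNIV (push UNIV (chan1 P) R1) (margY P)
      \<le> e / Min (range (margX P)) * kl_div UNIV R1 (margX P)" by simp
  moreover have "kl_div UNIV (push UNIV (chan1 P) R1) (margY P)
      \<le> chi_sq UNIV (push UNIV (chan1 P) R1) (margY P)"
    using kl_div_le_chi_sq[OF _ _ push_R1] is_pmf_on_margX margY_pos
    by (simp add: push_chan1_margX[symmetric] is_pmf_on_push is_channel_chan1)
  ultimately show "kl_div UNIV (push UNIV (chan1 P) R1) (margY P)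
      \<le> e / Min (range (margX P)) * kl_div UNIV R1 (margX P)" by linarith
qed

lemma eta_chi_sq_nonneg:
  assumes "2 \<le> CARD('x)"
  shows "0 \<le> eta_chi_sq (lists_len (Suc n)) (lists_len (Suc n))
                (inputN (Suc n) P) (chanN (Suc n) P)"
proof -
  obtain x0 x1 :: 'x where "x0 \<noteq> x1"
  proof -
    have "\<not> UNIV \<subseteq> {undefined :: 'x}"
      using assms card_mono[of "{undefined :: 'x}" UNIV] by auto
    then show ?thesis using that by blast
  qed
  define \<delta> where "\<delta> x = (if x = x0 then 1 else 0 :: real)" for x
  have "is_pmf_on UNIV \<delta>" unfolding is_pmf_on_def \<delta>_def by simp
  moreover have "0 < chi_sq UNIV \<delta> (margX P)"
  proof -
    have "margX P x1 = (\<delta> x1 - margX P x1)\<^sup>2 / margX P x1"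
      using \<open>x0 \<noteq> x1\<close> by (simp add: \<delta>_def power2_eq_square)
    also have "\<dots> \<le> chi_sq UNIV \<delta> (margX P)"
      unfolding chi_sq_def using margX_pos by (intro member_le_sum) (auto intro: divide_nonneg_pos)
    finally show ?thesis using margX_pos by (metis less_le_trans)
  qed
  ultimately have le:
    "ereal (chi_sq UNIV (push UNIV (chan1 P) \<delta>) (margY P) / chi_sq UNIV \<delta> (margX P))
      \<le> eta_chi_sq (lists_len (Suc n)) (lists_len (Suc n)) (inputN (Suc n) P) (chanN (Suc n) P)"
    by (rule chi_sq_ratio_chan1_le_eta_chi_sq)
  have "ereal 0 \<le> ereal (chi_sq UNIV (push UNIV (chan1 P) \<delta>) (margY P) / chi_sq UNIV \<delta> (margX P))"
    using chi_sq_nonneg[of UNIV "margY P"] margY_pos \<open>0 < chi_sq UNIV \<delta> (margX P)\<close> by simp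
  from order.trans[OF this le] show ?thesis by (simp add: zero_ereal_def)
qed

lemma eta_kl_le_eta_chi_sq:
  assumes "2 \<le> CARD('x)"
  shows "eta_kl (lists_len (Suc n)) (lists_len (Suc n)) (inputN (Suc n) P) (chanN (Suc n) P)
       \<le> ereal (1 / Min (range (margX P)))
         * eta_chi_sq (lists_len (Suc n)) (lists_len (Suc n)) (inputN (Suc n) P) (chanN (Suc n) P)"
    (is "?eta_kl \<le> ereal (1 / ?m) * ?eta_chi_sq")
proof (cases ?eta_chi_sq)
  case (real e)
  then have "0 \<le> e" using eta_chi_sq_nonneg[OF assms, of n] by simp
  have "kl_sdpi UNIV UNIV (margX P) (chan1 P) (e / ?m)"
  proof (rule kl_sdpi_chan1_of_chi_sq[OF \<open>0 \<le> e\<close>])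
    fix R1 :: "'x \<Rightarrow> real" assume "is_pmf_on UNIV R1" "0 < chi_sq UNIV R1 (margX P)"
    then show "chi_sq UNIV (push UNIV (chan1 P) R1) (margY P) \<le> e * chi_sq UNIV R1 (margX P)"
      using chi_sq_ratio_chan1_le_eta_chi_sq[of R1 n] real by (simp add: divide_le_eq)
  qed
  then have "?eta_kl \<le> ereal (e / ?m)"
    by (intro eta_kl_le_of_kl_sdpi kl_sdpi_iid divide_nonneg_pos \<open>0 \<le> e\<close> Min_margX_pos)
  then show ?thesis using real by simp
qed (use eta_chi_sq_nonneg[OF assms, of n] Min_margX_pos in \<open>simp_all del: Min_gr_iff\<close>)

end

theorem corollary3:
  fixes P :: "'x::finite \<Rightarrow> 'y::finite \<Rightarrow> real"
    and f :: "real \<Rightarrow> real" and f0 :: real and n :: nat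
  assumes "CARD('x) \<ge> 2" and "CARD('y) \<ge> 2"
    and "\<forall>x y. 0 \<le> P x y" and "(\<Sum>x\<in>UNIV. \<Sum>y\<in>UNIV. P x y) = 1"
    and "\<forall>x. margX P x > 0" and "\<forall>y. margY P y > 0"
    and "convex_on {0<..} f" and "strictly_convex_at_one f" and "thrice_diff_at f 1"
    and "f 1 = 0" and "deriv (deriv f) 1 > 0"
    and "\<forall>t>0. (f t - deriv f 1 * (t - 1)) *
               (1 - deriv (deriv (deriv f)) 1 / (3 * deriv (deriv f) 1) * (t - 1))
             \<ge> deriv (deriv f) 1 / 2 * (t - 1)\<^sup>2"
    and "(f \<longlongrightarrow> f0) (at_right 0)"
    and "concave_on {0<..} (\<lambda>x. (f x - f0) / x)"
    and "fent_subadditive f0 f" and "fent_homogeneous f0 f"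
    and "n \<ge> 1"
  shows "eta_chi2 (lists_len n) (lists_len n) (inputN n P) (chanN n P)
           \<le> eta f0 f (lists_len n) (lists_len n) (inputN n P) (chanN n P)
         \<and> eta f0 f (lists_len n) (lists_len n) (inputN n P) (chanN n P)
           \<le> ereal ((deriv f 1 + f0) / (deriv (deriv f) 1 * Min (range (margX P))))
               * eta_chi2 (lists_len n) (lists_len n) (inputN n P) (chanN n P)"
proof -
  interpret joint_pmf P using assms(3-6) by unfold_locales
  obtain m where n: "n = Suc m" using \<open>1 \<le> n\<close> by (cases n) auto
  define c where "c = deriv f 1 + f0"
  have "f differentiable (at 1)" using \<open>thrice_diff_at f 1\<close> unfolding thrice_diff_at_def by force
  then have f: "\<forall>t>0. f t = c * t * ln t + f0 * (1 - t)"
    unfolding c_def using fent_homogeneous_imp_xlnx[OF \<open>fent_homogeneous f0 f\<close> \<open>f 1 = 0\<close>] by blast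
  have "deriv (deriv f) 1 = c" using f by (rule deriv2_xlnx)
  then have "0 < c" and const: "(deriv f 1 + f0) / (deriv (deriv f) 1 * Min (range (margX P)))
      = 1 / Min (range (margX P))"
    using \<open>0 < deriv (deriv f) 1\<close> unfolding c_def by simp_all
  let ?L = "lists_len n" and ?P = "inputN n P" and ?W = "chanN n P"
  have pos: "\<forall>xs\<in>?L. 0 < ?P xs" "\<forall>ys\<in>?L. 0 < push ?L ?W ?P ys"
    using inputN_pos push_chanN_inputN_pos by auto
  have "eta f0 f ?L ?L ?P ?W = eta_kl ?L ?L ?P ?W"
    using pos is_pmf_on_inputN is_channel_chanN \<open>0 < c\<close> f
    by (intro eta_eq_eta_kl[where c = c]) simp_all
  moreover have "eta_chi2 ?L ?L ?P ?W = eta_chi_sq ?L ?L ?P ?W"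
    using pos by (rule eta_chi2_eq_eta_chi_sq)
  moreover have "eta_chi_sq ?L ?L ?P ?W \<le> eta_kl ?L ?L ?P ?W"
    using pos is_pmf_on_inputN is_channel_chanN by (intro eta_chi_sq_le_eta_kl) simp_all
  ultimately show ?thesis
    unfolding const using eta_kl_le_eta_chi_sq[OF \<open>2 \<le> CARD('x)\<close>] n by simp
qed

end
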